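(* Every maximal (with respect to inclusion) thin subset of $\mathbb{Z}_2^\omega$ is neither Borel nor meager.
   Context: $\mathbb{Z}_2^\omega$ is the Cantor cube of infinite binary sequences indexed by $\omega=\{0,1,2,\dots\}$, with the product (Tychonoff) topology. A set $T\subseteq\mathbb{Z}_2^\omega$ is thin if for every $n\in\omega$ the map $x\mapsto x|_{\omega\setminus\{n\}}$ is injective on $T$ (equivalently, no two distinct elements of $T$ differ in exactly one coordinate). *)

theory Defs
  imports "HOL-Analysis.Analysis"
begin

text \<open>The Cantor cube Z_2^omega is modelled as the type nat \<Rightarrow> bool, carrying the
  product topology (instance from Function_Topology; bool is discrete).\<close>

definition thin :: "(nat \<Rightarrow> bool) set \<Rightarrow> bool" where
  "thin T \<longleftrightarrow> (\<forall>n. inj_on (\<lambda>x. restrict x (UNIV - {n})) T)"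

definition maximal_thin :: "(nat \<Rightarrow> bool) set \<Rightarrow> bool" where
  "maximal_thin T \<longleftrightarrow> thin T \<and> (\<forall>S. thin S \<and> T \<subseteq> S \<longrightarrow> S = T)"

definition nowhere_dense :: "'a::topological_space set \<Rightarrow> bool" where
  "nowhere_dense A \<longleftrightarrow> interior (closure A) = {}"

definition meager :: "'a::topological_space set \<Rightarrow> bool" where
  "meager A \<longleftrightarrow> (\<exists>F. countable F \<and> (\<forall>N\<in>F. nowhere_dense N) \<and> A \<subseteq> \<Union>F)"

end

theory Submission
  imports Defs
begin

text \<open>A maximal thin set \<open>T\<close> is not meager: every point outside \<open>T\<close> becomes a point of \<open>T\<close>
  after flipping one coordinate, so the cube is covered by \<open>T\<close> and its countably many images
  under the coordinate flips, which are homeomorphisms. If \<open>T\<close> were Borel, it would have the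
  Baire property and hence, being non-meager, be comeager in some basic cylinder \<open>C\<close> fixing the
  first \<open>N\<close> coordinates. Flipping coordinate \<open>N\<close> maps \<open>C\<close> onto itself and, by thinness,
  maps \<open>C \<inter> T\<close> into \<open>C - T\<close>; so \<open>C\<close> would be the union of two meager sets, contradicting
  the Baire category theorem.\<close>

lemma meager_empty [simp]: "meager {}"
  unfolding meager_def by blast

lemma meager_subset:
  assumes "meager B" "A \<subseteq> B"
  shows "meager A"
proof -
  obtain F where "countable F" "\<forall>N\<in>F. nowhere_dense N" "B \<subseteq> \<Union>F"
    using assms(1) unfolding meager_def by blast
  with assms(2) show ?thesis
    unfolding meager_def by (intro exI[of _ F]) auto
qed

lemma nowhere_dense_imp_meager: "nowhere_dense N \<Longrightarrow> meager N"
  unfolding meager_def by (intro exI[of _ "{N}"]) auto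

lemma meager_Un:
  assumes "meager A" "meager B"
  shows "meager (A \<union> B)"
proof -
  obtain F where "countable F" "\<forall>N\<in>F. nowhere_dense N" "A \<subseteq> \<Union>F"
    using assms(1) unfolding meager_def by blast
  moreover obtain G where "countable G" "\<forall>N\<in>G. nowhere_dense N" "B \<subseteq> \<Union>G"
    using assms(2) unfolding meager_def by blast
  ultimately show ?thesis
    unfolding meager_def by (intro exI[of _ "F \<union> G"]) auto
qed

lemma meager_UN:
  assumes "countable I" "\<And>i. i \<in> I \<Longrightarrow> meager (A i)"
  shows "meager (\<Union>i\<in>I. A i)"
proof -
  have "\<forall>i\<in>I. \<exists>F. countable F \<and> (\<forall>N\<in>F. nowhere_dense N) \<and> A i \<subseteq> \<Union>F"
    using assms(2) unfolding meager_def by blast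
  then obtain F where F: "\<forall>i\<in>I. countable (F i) \<and> (\<forall>N\<in>F i. nowhere_dense N) \<and> A i \<subseteq> \<Union>(F i)"
    by (metis bchoice)
  have "countable (\<Union>i\<in>I. F i)"
    using assms(1) F by simp
  moreover have "\<forall>N\<in>(\<Union>i\<in>I. F i). nowhere_dense N"
    using F by simp
  moreover have "(\<Union>i\<in>I. A i) \<subseteq> \<Union>(\<Union>i\<in>I. F i)"
    using F by (simp add: subset_iff) meson
  ultimately show ?thesis
    unfolding meager_def by blast
qed

lemma nowhere_dense_homeomorphic_image:
  assumes "homeomorphic_map euclidean euclidean f" "nowhere_dense N"
  shows "nowhere_dense (f ` N)"
proof -
  have "closure (f ` N) = f ` closure N"
    using homeomorphic_map_closure_of[OF assms(1), of N] by simp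
  moreover have "interior (f ` closure N) = f ` interior (closure N)"
    using homeomorphic_map_interior_of[OF assms(1), of "closure N"] by simp
  ultimately show ?thesis
    using assms(2) by (simp add: nowhere_dense_def)
qed

lemma meager_homeomorphic_image:
  assumes "homeomorphic_map euclidean euclidean f" "meager A"
  shows "meager (f ` A)"
proof -
  obtain F where F: "countable F" "\<forall>N\<in>F. nowhere_dense N" "A \<subseteq> \<Union>F"
    using assms(2) unfolding meager_def by blast
  have "\<forall>N\<in>image f ` F. nowhere_dense N"
    using F(2) nowhere_dense_homeomorphic_image[OF assms(1)] by blast
  moreover have "f ` A \<subseteq> \<Union>(image f ` F)"
    using F(3) by blast
  ultimately show ?thesis
    unfolding meager_def using F(1) by blast
qed

lemma nowhere_dense_closed_diff_interior:
  assumes "closed C"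
  shows "nowhere_dense (C - interior C)"
proof -
  have "interior (closure (C - interior C)) \<subseteq> interior C"
    using assms by (simp add: closure_minimal interior_mono)
  moreover have "interior (closure (C - interior C)) \<subseteq> C - interior C"
    using assms by (metis closed_Diff closure_closed interior_subset open_interior)
  ultimately show ?thesis
    unfolding nowhere_dense_def by blast
qed

lemma open_not_meager:
  fixes U :: "'a::topological_space set"
  assumes "compact_space (euclidean :: 'a topology)" "Hausdorff_space (euclidean :: 'a topology)"
    and "open U" "U \<noteq> {}"
  shows "\<not> meager U"
proof
  assume "meager U"
  then obtain F where F: "countable F" "\<forall>N\<in>F. nowhere_dense N" "U \<subseteq> \<Union>F"
    unfolding meager_def by blast
  have "interior (\<Union>(closure ` F)) = {}"
  proof (subst euclidean_interior_of[symmetric], rule Baire_category_alt)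
    show "completely_metrizable_space (euclidean :: 'a topology) \<or>
        locally_compact_space (euclidean :: 'a topology) \<and> regular_space (euclidean :: 'a topology)"
      using assms(1,2) compact_Hausdorff_imp_regular_space compact_imp_locally_compact_space by blast
    show "countable (closure ` F)"
      using F(1) by simp
    show "closedin euclidean C \<and> euclidean interior_of C = {}" if "C \<in> closure ` F" for C
      using that F(2) by (auto simp: nowhere_dense_def)
  qed
  moreover have "\<Union>F \<subseteq> \<Union>(closure ` F)"
    using closure_subset by blast
  then have "U \<subseteq> interior (\<Union>(closure ` F))"
    using F(3) assms(3) by (intro interior_maximal) auto
  ultimately show False
    using assms(4) by blast
qed

definition Baire_property :: "'a::topological_space set \<Rightarrow> bool" where
  "Baire_property A \<longleftrightarrow> (\<exists>U. open U \<and> meager (A - U) \<and> meager (U - A))"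

lemma Baire_property_Compl: "Baire_property A \<Longrightarrow> Baire_property (- A)"
proof -
  assume "Baire_property A"
  then obtain U where U: "open U" "meager (A - U)" "meager (U - A)"
    unfolding Baire_property_def by blast
  have "meager (- U - interior (- U))"
    using U(1) by (intro nowhere_dense_imp_meager nowhere_dense_closed_diff_interior) auto
  then have "meager (- A - interior (- U))"
    using U(3) by (rule meager_subset[OF meager_Un]) blast
  moreover have "meager (interior (- U) - - A)"
    by (rule meager_subset[OF U(2)]) (use interior_subset in blast)
  ultimately show ?thesis
    unfolding Baire_property_def using open_interior by blast
qed

lemma Baire_property_UN:
  assumes "countable I" "\<And>i. i \<in> I \<Longrightarrow> Baire_property (A i)"
  shows "Baire_property (\<Union>i\<in>I. A i)"
proof -
  obtain U where U: "\<And>i. i \<in> I \<Longrightarrow> open (U i) \<and> meager (A i - U i) \<and> meager (U i - A i)"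
    using assms(2) unfolding Baire_property_def by metis
  have "meager ((\<Union>i\<in>I. A i) - (\<Union>i\<in>I. U i))"
    by (rule meager_subset[OF meager_UN[of I "\<lambda>i. A i - U i"]]) (use assms(1) U in blast)+
  moreover have "meager ((\<Union>i\<in>I. U i) - (\<Union>i\<in>I. A i))"
    by (rule meager_subset[OF meager_UN[of I "\<lambda>i. U i - A i"]]) (use assms(1) U in blast)+
  moreover have "open (\<Union>i\<in>I. U i)"
    using U by blast
  ultimately show ?thesis
    unfolding Baire_property_def by blast
qed

lemma borel_imp_Baire_property:
  assumes "A \<in> sets borel"
  shows "Baire_property A"
proof -
  have "A \<in> sigma_sets UNIV {S. open S}"
    using assms by (simp add: sets_borel)
  then show ?thesis
  proof induction
    case (Basic U)
    then show ?case
      unfolding Baire_property_def by (intro exI[of _ U]) simp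
  next
    case Empty
    show ?case
      unfolding Baire_property_def by (intro exI[of _ "{}"]) simp
  next
    case (Compl A)
    then show ?case
      using Baire_property_Compl by (simp add: Compl_eq_Diff_UNIV)
  next
    case (Union A)
    then show ?case
      using Baire_property_UN[of UNIV A] by simp
  qed
qed

lemma Baire_property_not_meager_imp_open:
  assumes "Baire_property A" "\<not> meager A"
  obtains U where "open U" "U \<noteq> {}" "meager (U - A)"
proof -
  obtain U where U: "open U" "meager (A - U)" "meager (U - A)"
    using assms(1) unfolding Baire_property_def by blast
  have "U \<noteq> {}"
    using U(2) assms(2) by auto
  with U that show thesis by blast
qed

lemma Hausdorff_space_euclidean_t2: "Hausdorff_space (euclidean :: 'a::t2_space topology)"
  unfolding Hausdorff_space_def disjnt_def by (metis hausdorff open_openin)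

lemma Hausdorff_space_euclidean_fun: "Hausdorff_space (euclidean :: ('i \<Rightarrow> 'a::t2_space) topology)"
  unfolding euclidean_product_topology[symmetric] Hausdorff_space_product_topology
  by (simp add: Hausdorff_space_euclidean_t2)

lemma compact_space_euclidean_fun:
  "compact_space (euclidean :: ('i \<Rightarrow> 'a::{topological_space,finite}) topology)"
  unfolding euclidean_product_topology[symmetric] compact_space_product_topology
  by (simp add: compact_space_def finite_imp_compact)

definition cylinder :: "nat \<Rightarrow> (nat \<Rightarrow> 'a) \<Rightarrow> (nat \<Rightarrow> 'a) set" where
  "cylinder N x = {y. \<forall>i<N. y i = x i}"

lemma center_in_cylinder [simp]: "x \<in> cylinder N x"
  by (simp add: cylinder_def)

lemma open_cylinder: "open (cylinder N (x :: nat \<Rightarrow> 'a::discrete_topology))"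
proof -
  have "open {y :: nat \<Rightarrow> 'a. \<forall>i\<in>{..<N}. y (id i) \<in> {x i}}"
    by (rule product_topology_basis') (auto intro: open_discrete)
  moreover have "{y :: nat \<Rightarrow> 'a. \<forall>i\<in>{..<N}. y (id i) \<in> {x i}} = cylinder N x"
    by (auto simp: cylinder_def)
  ultimately show ?thesis
    by simp
qed

lemma open_contains_cylinder:
  fixes U :: "(nat \<Rightarrow> 'a::discrete_topology) set"
  assumes "open U" "x \<in> U"
  obtains N where "cylinder N x \<subseteq> U"
proof -
  obtain V where V: "finite {i. V i \<noteq> UNIV}" "x \<in> Pi\<^sub>E UNIV V" "Pi\<^sub>E UNIV V \<subseteq> U"
    using assms unfolding open_fun_def openin_product_topology_alt by auto
  obtain N where N: "\<And>i. V i \<noteq> UNIV \<Longrightarrow> i < N"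
    using V(1) unfolding finite_nat_set_iff_bounded by blast
  have "cylinder N x \<subseteq> Pi\<^sub>E UNIV V"
  proof
    fix y assume y: "y \<in> cylinder N x"
    have "y i \<in> V i" for i
    proof (cases "i < N")
      case True
      then show ?thesis
        using y V(2) by (simp add: cylinder_def PiE_iff)
    next
      case False
      then show ?thesis
        using N by blast
    qed
    then show "y \<in> Pi\<^sub>E UNIV V"
      by (simp add: PiE_iff)
  qed
  then show thesis
    using V(3) by (blast intro: that)
qed

definition flip :: "nat \<Rightarrow> (nat \<Rightarrow> bool) \<Rightarrow> nat \<Rightarrow> bool" where
  "flip n x = x(n := \<not> x n)"

lemma flip_flip [simp]: "flip n (flip n x) = x"
  by (auto simp: flip_def)

lemma flip_neq [simp]: "flip n x \<noteq> x"
  by (auto simp: flip_def fun_eq_iff)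

lemma mem_flip_image_iff [simp]: "x \<in> flip n ` A \<longleftrightarrow> flip n x \<in> A"
  by (metis flip_flip image_iff)

lemma flip_in_cylinder_iff [simp]: "N \<le> n \<Longrightarrow> flip n y \<in> cylinder N x \<longleftrightarrow> y \<in> cylinder N x"
  by (simp add: flip_def cylinder_def)

lemma homeomorphic_map_flip: "homeomorphic_map euclidean euclidean (flip n)"
proof (rule homeomorphic_map_involution)
  have "continuous_on UNIV (\<lambda>x :: nat \<Rightarrow> bool. \<not> x n)"
    using continuous_on_compose[OF continuous_on_product_coordinates
        Topological_Spaces.continuous_on_discrete[of _ Not]]
    by (simp add: o_def)
  then have "continuous_on UNIV (\<lambda>x. flip n x i)" for i
    by (cases "i = n") (simp_all add: flip_def)
  then show "continuous_map euclidean euclidean (flip n)"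
    by (simp add: continuous_on_coordinatewise_then_product)
qed simp

lemma restrict_eq_iff_flip:
  "restrict x (UNIV - {n}) = restrict y (UNIV - {n}) \<longleftrightarrow> y = x \<or> y = flip n x"
  by (auto simp: restrict_def flip_def fun_eq_iff)

lemma thin_iff_flip: "thin T \<longleftrightarrow> (\<forall>x\<in>T. \<forall>n. flip n x \<notin> T)"
  unfolding thin_def inj_on_def restrict_eq_iff_flip by (metis flip_flip flip_neq)

lemma maximal_thin_flip:
  assumes "maximal_thin T" "x \<notin> T"
  obtains n where "flip n x \<in> T"
proof -
  have "thin T" "\<not> thin (insert x T)"
    using assms unfolding maximal_thin_def by auto
  then obtain y n where y: "y \<in> insert x T" "flip n y \<in> insert x T"
    unfolding thin_iff_flip by blast
  show thesis
  proof (cases "y = x")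
    case True
    then show thesis
      using y(2) that by simp
  next
    case False
    then have "flip n y = x"
      using y \<open>thin T\<close> unfolding thin_iff_flip by blast
    then have "flip n x \<in> T"
      using y(1) False by auto
    then show thesis
      by (rule that)
  qed
qed

lemma Cantor_open_not_meager:
  fixes U :: "(nat \<Rightarrow> bool) set"
  assumes "open U" "U \<noteq> {}"
  shows "\<not> meager U"
  using open_not_meager[OF compact_space_euclidean_fun Hausdorff_space_euclidean_fun assms] .

lemma maximal_thin_not_meager:
  assumes "maximal_thin T"
  shows "\<not> meager T"
proof
  assume "meager T"
  have "UNIV \<subseteq> T \<union> (\<Union>n. flip n ` T)"
  proof
    fix x :: "nat \<Rightarrow> bool"
    show "x \<in> T \<union> (\<Union>n. flip n ` T)"
    proof (cases "x \<in> T")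
      case False
      then obtain n where "flip n x \<in> T"
        using maximal_thin_flip[OF assms] by blast
      then show ?thesis
        by auto
    qed simp
  qed
  moreover have "meager (T \<union> (\<Union>n. flip n ` T))"
    using \<open>meager T\<close> by (intro meager_Un meager_UN meager_homeomorphic_image homeomorphic_map_flip) simp_all
  ultimately have "meager (UNIV :: (nat \<Rightarrow> bool) set)"
    by (rule meager_subset[rotated])
  then show False
    using Cantor_open_not_meager[of UNIV] by simp
qed

lemma thin_Baire_property_imp_meager:
  assumes "thin T" "Baire_property T"
  shows "meager T"
proof (rule ccontr)
  assume "\<not> meager T"
  then obtain U where U: "open U" "U \<noteq> {}" "meager (U - T)"
    using Baire_property_not_meager_imp_open assms(2) by blast
  then obtain x where "x \<in> U"
    by blast
  then obtain N where "cylinder N x \<subseteq> U"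
    using open_contains_cylinder U(1) by blast
  define C where "C = cylinder N x"
  have "meager (C - T)"
    by (rule meager_subset[OF U(3)]) (use \<open>cylinder N x \<subseteq> U\<close> in \<open>auto simp: C_def\<close>)
  have "C \<subseteq> (C - T) \<union> flip N ` (C - T)"
  proof
    fix y assume "y \<in> C"
    show "y \<in> (C - T) \<union> flip N ` (C - T)"
    proof (cases "y \<in> T")
      case True
      then have "flip N y \<in> C - T"
        using \<open>y \<in> C\<close> \<open>thin T\<close> by (simp add: C_def thin_iff_flip)
      then show ?thesis
        by simp
    qed (use \<open>y \<in> C\<close> in blast)
  qed
  moreover have "meager ((C - T) \<union> flip N ` (C - T))"
    using \<open>meager (C - T)\<close> by (intro meager_Un meager_homeomorphic_image homeomorphic_map_flip)
  ultimately have "meager C"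
    by (rule meager_subset[rotated])
  moreover have "open C" "C \<noteq> {}"
    unfolding C_def using open_cylinder center_in_cylinder by blast+
  ultimately show False
    using Cantor_open_not_meager by blast
qed

theorem corollary10:
  fixes T :: "(nat \<Rightarrow> bool) set"
  assumes "maximal_thin T"
  shows "T \<notin> sets borel \<and> \<not> meager T"
proof
  show "\<not> meager T"
    using assms by (rule maximal_thin_not_meager)
  moreover have "thin T"
    using assms unfolding maximal_thin_def by blast
  ultimately show "T \<notin> sets borel"
    using thin_Baire_property_imp_meager borel_imp_Baire_property by blast
qed

end
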